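(* Let $L>0$, $a>0$, $u_0>0$, and let $\texttt{sat}:\mathbb{R}\to\mathbb{R}$ be $\texttt{sat}(s)=-u_0$ if $s<-u_0$, $\texttt{sat}(s)=s$ if $-u_0\le s\le u_0$, $\texttt{sat}(s)=u_0$ if $s>u_0$. Let $A$ be the operator $Aw=-w'-w'''-a\,\texttt{sat}(w)$ (saturation applied pointwise) with domain $D(A)=H^3_L(0,L)=\{w\in H^3(0,L): w(0)=w(L)=w'(L)=0\}$, and equip $D(A)$ with the graph norm $\|u\|_{D(A)}^2:=\|u\|_{L^2(0,L)}^2+\|Au\|_{L^2(0,L)}^2$. Then the canonical embedding from $D(A)$ into $L^2(0,L)$ is compact: every sequence in $D(A)$ bounded in the graph norm has a subsequence converging strongly in $L^2(0,L)$.
   Context: $H^3(0,L)$ is the set of $u\in L^2(0,L)$ with $u_x,u_{xx},u_{xxx}\in L^2(0,L)$. *)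

theory Defs
  imports "HOL-Analysis.Analysis"
begin

definition sat :: "real \<Rightarrow> real \<Rightarrow> real" where
  "sat u0 s = (if s < - u0 then - u0 else if s \<le> u0 then s else u0)"

definition L2 :: "real \<Rightarrow> (real \<Rightarrow> real) \<Rightarrow> bool" where
  "L2 L f \<longleftrightarrow> set_borel_measurable lborel {0..L} f \<and>
               set_integrable lborel {0..L} (\<lambda>x. (f x)\<^sup>2)"

definition L2_norm_sq :: "real \<Rightarrow> (real \<Rightarrow> real) \<Rightarrow> real" where
  "L2_norm_sq L f = (LINT x:{0..L}|lborel. (f x)\<^sup>2)"

definition test_fun :: "real \<Rightarrow> (real \<Rightarrow> real) \<Rightarrow> bool" where
  "test_fun L \<phi> \<longleftrightarrow> (\<forall>k x. ((deriv ^^ k) \<phi>) differentiable (at x)) \<and>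
     (\<exists>c d. 0 < c \<and> c \<le> d \<and> d < L \<and> (\<forall>x. x \<notin> {c..d} \<longrightarrow> \<phi> x = 0))"

definition weak_deriv :: "real \<Rightarrow> (real \<Rightarrow> real) \<Rightarrow> (real \<Rightarrow> real) \<Rightarrow> bool" where
  "weak_deriv L u v \<longleftrightarrow> (\<forall>\<phi>. test_fun L \<phi> \<longrightarrow>
     (LINT x:{0..L}|lborel. u x * deriv \<phi> x) = - (LINT x:{0..L}|lborel. v x * \<phi> x))"

text \<open>Point values refer to the continuous representatives of w and w'.\<close>
definition in_H3L :: "real \<Rightarrow> (real \<Rightarrow> real) \<Rightarrow> (real \<Rightarrow> real) \<Rightarrow> (real \<Rightarrow> real)
                      \<Rightarrow> (real \<Rightarrow> real) \<Rightarrow> bool" where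
  "in_H3L L w w1 w2 w3 \<longleftrightarrow>
     L2 L w \<and> L2 L w1 \<and> L2 L w2 \<and> L2 L w3 \<and>
     weak_deriv L w w1 \<and> weak_deriv L w1 w2 \<and> weak_deriv L w2 w3 \<and>
     continuous_on {0..L} w \<and> continuous_on {0..L} w1 \<and>
     w 0 = 0 \<and> w L = 0 \<and> w1 L = 0"

definition A_op :: "real \<Rightarrow> real \<Rightarrow> (real \<Rightarrow> real) \<Rightarrow> (real \<Rightarrow> real) \<Rightarrow> (real \<Rightarrow> real)
                    \<Rightarrow> real \<Rightarrow> real" where
  "A_op a u0 w w1 w3 = (\<lambda>x. - w1 x - w3 x - a * sat u0 (w x))"

end

theory Submission
  imports Defs "HOL-Complex_Analysis.Great_Picard" "HOL-Computational_Algebra.Polynomial"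
begin

text \<open>Multiplying \<open>w' + w'''\<close> by \<open>x w\<close> and integrating by parts, the boundary conditions give
  Kato's identity \<open>\<integral> x w (w' + w''') = 3/2 \<parallel>w'\<parallel>\<^sup>2 - 1/2 \<parallel>w\<parallel>\<^sup>2\<close>. Since
  \<open>w' + w''' = - A w - a sat(w)\<close> with \<open>|sat| \<le> u\<^sub>0\<close>, a bound in the graph norm bounds \<open>\<parallel>w'\<parallel>\<close>.
  Together with \<open>w(0) = 0\<close> this makes the sequence uniformly bounded and equicontinuous on
  \<open>[0, L]\<close>, so by Arzela-Ascoli a subsequence converges uniformly, hence in \<open>L\<^sup>2\<close>.
  To apply classical calculus, the weak derivatives are first identified with classical ones
  via the du Bois-Reymond lemma, whose proof uses smooth bump functions built from
  \<open>exp (- 1 / x)\<close>.\<close>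

section \<open>Smooth test functions\<close>

definition deriv_seq :: "(nat \<Rightarrow> real \<Rightarrow> real) \<Rightarrow> bool" where
  "deriv_seq D \<longleftrightarrow> (\<forall>k x. (D k has_real_derivative D (Suc k) x) (at x))"

lemma deriv_seq_funpow:
  assumes "deriv_seq D"
  shows "(deriv ^^ k) (D 0) = D k"
proof (induction k)
  case (Suc k)
  have "(deriv ^^ Suc k) (D 0) = deriv (D k)" using Suc by simp
  also have "\<dots> = D (Suc k)"
    using assms by (auto simp: deriv_seq_def intro!: ext DERIV_imp_deriv)
  finally show ?case .
qed simp

lemma deriv_seq_imp_test_fun:
  assumes "deriv_seq D" "0 < c" "c \<le> d" "d < L" "\<And>x. x \<notin> {c..d} \<Longrightarrow> D 0 x = 0"
  shows "test_fun L (D 0)"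
  using assms deriv_seq_funpow[OF assms(1)]
  unfolding test_fun_def deriv_seq_def by (metis real_differentiable_def)

lemma test_fun_deriv_seq:
  assumes "test_fun L \<phi>"
  shows "deriv_seq (\<lambda>k. (deriv ^^ k) \<phi>)"
  using assms by (simp add: deriv_seq_def test_fun_def DERIV_deriv_iff_real_differentiable)

lemma deriv_seq_diff:
  assumes "deriv_seq D" "deriv_seq G"
  shows "deriv_seq (\<lambda>j x. D j x - k * G j x)"
  using assms unfolding deriv_seq_def by (auto intro!: derivative_eq_intros)

lemma deriv_seq_affine:
  assumes "deriv_seq D"
  shows "deriv_seq (\<lambda>k x. a ^ k * D k (a * x + b))"
  unfolding deriv_seq_def
proof (intro allI)
  fix k x
  have "(D k has_real_derivative D (Suc k) (a * x + b)) (at (a * x + b))"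
    using assms by (auto simp: deriv_seq_def)
  then have "((\<lambda>x. D k (a * x + b)) has_real_derivative D (Suc k) (a * x + b) * a) (at x)"
    by (rule DERIV_chain2) (auto intro!: derivative_eq_intros)
  then show "((\<lambda>x. a ^ k * D k (a * x + b)) has_real_derivative
               a ^ Suc k * D (Suc k) (a * x + b)) (at x)"
    by (auto intro!: derivative_eq_intros simp: algebra_simps)
qed

lemma deriv_seq_mult:
  assumes D: "deriv_seq D" and G: "deriv_seq G"
  shows "deriv_seq (\<lambda>k x. \<Sum>i = 0..k. of_nat (k choose i) * D i x * G (k - i) x)"
  unfolding deriv_seq_def
proof (intro allI)
  fix n x
  have dD: "(D i has_field_derivative D (Suc i) x) (at x)"
   and dG: "(G i has_field_derivative G (Suc i) x) (at x)" for i
    using D G by (auto simp: deriv_seq_def)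
  have Leibniz: "(\<Sum>i = 0..n. of_nat (n choose i) *
                   (D (Suc i) x * G (n - i) x + G (Suc (n - i)) x * D i x)) =
      G 0 x * D (Suc n) x + (\<Sum>i = 0..n. D i x * (of_nat (Suc n choose i) * G (Suc n - i) x))"
    apply (simp add: Suc_choose algebra_simps sum.distrib)
    apply (subst (4) sum_Suc_reindex)
    apply (auto simp: algebra_simps Suc_diff_le intro: sum.cong)
    done
  show "((\<lambda>x. \<Sum>i = 0..n. of_nat (n choose i) * D i x * G (n - i) x) has_real_derivative
         (\<Sum>i = 0..Suc n. of_nat (Suc n choose i) * D i x * G (Suc n - i) x)) (at x)"
    apply (rule derivative_eq_intros | simp)+
    apply (auto intro: dD dG)
    using Leibniz by (simp add: algebra_simps Suc_diff_le)
qed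

lemma poly_over_exp_tendsto_0: "((\<lambda>z. poly q z / exp z) \<longlongrightarrow> (0::real)) at_top"
proof -
  have "((\<lambda>z. \<Sum>i\<le>degree q. coeff q i * (z ^ i / exp z)) \<longlongrightarrow> (\<Sum>i\<le>degree q. coeff q i * 0)) at_top"
    by (intro tendsto_sum tendsto_mult tendsto_const tendsto_power_div_exp_0)
  then show ?thesis by (simp add: poly_altdef sum_divide_distrib)
qed

text \<open>On \<open>x > 0\<close> the \<open>k\<close>-th derivative of \<open>exp (- 1 / x)\<close> is
  \<open>poly (flat_poly k) (1 / x) * exp (- 1 / x)\<close>; all of them tend to \<open>0\<close> at \<open>0\<^sup>+\<close>, so
  extension by \<open>0\<close> gives a smooth function vanishing on \<open>x \<le> 0\<close>.\<close>

fun flat_poly :: "nat \<Rightarrow> real poly" where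
  "flat_poly 0 = 1"
| "flat_poly (Suc k) = [:0, 0, 1:] * (flat_poly k - pderiv (flat_poly k))"

definition flat_exp :: "nat \<Rightarrow> real \<Rightarrow> real" where
  "flat_exp k x = (if x > 0 then poly (flat_poly k) (1 / x) * exp (- (1 / x)) else 0)"

lemma flat_exp_pos_deriv:
  assumes "x > 0"
  shows "((\<lambda>x. poly (flat_poly k) (1 / x) * exp (- (1 / x))) has_real_derivative
           flat_exp (Suc k) x) (at x)"
proof -
  have d1: "((\<lambda>x. poly (flat_poly k) (1 / x)) has_real_derivative
              poly (pderiv (flat_poly k)) (1 / x) * (- 1 / x\<^sup>2)) (at x)"
    by (rule DERIV_chain2[OF poly_DERIV])
       (use assms in \<open>auto intro!: derivative_eq_intros simp: power2_eq_square\<close>)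
  have d2: "((\<lambda>x. exp (- (1 / x))) has_real_derivative exp (- (1 / x)) * (1 / x\<^sup>2)) (at x)"
    using assms by (auto intro!: derivative_eq_intros simp: power2_eq_square field_simps)
  show ?thesis
    using DERIV_mult[OF d1 d2] assms
    by (simp add: flat_exp_def algebra_simps power2_eq_square divide_simps)
qed

lemma flat_exp_deriv_0: "(flat_exp k has_real_derivative 0) (at 0)"
proof -
  have "((\<lambda>y. (flat_exp k y - flat_exp k 0) / (y - 0)) \<longlongrightarrow> 0) (at 0)"
  proof (rule filterlim_split_at)
    have "eventually (\<lambda>y. 0 = (flat_exp k y - flat_exp k 0) / (y - 0)) (at_left (0::real))"
      by (rule eventually_at_leftI[of "-1"]) (auto simp: flat_exp_def)
    then show "((\<lambda>y. (flat_exp k y - flat_exp k 0) / (y - 0)) \<longlongrightarrow> 0) (at_left 0)"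
      by (rule Lim_transform_eventually[rotated]) simp
  next
    have "eventually (\<lambda>z. poly (pCons 0 (flat_poly k)) z / exp z =
            (flat_exp k (inverse z) - flat_exp k 0) / (inverse z - 0)) at_top"
      using eventually_gt_at_top[of 0]
      by eventually_elim (simp add: flat_exp_def field_simps exp_minus)
    then have "((\<lambda>z. (flat_exp k (inverse z) - flat_exp k 0) / (inverse z - 0)) \<longlongrightarrow> 0) at_top"
      using poly_over_exp_tendsto_0 by (rule Lim_transform_eventually[rotated])
    then show "((\<lambda>y. (flat_exp k y - flat_exp k 0) / (y - 0)) \<longlongrightarrow> 0) (at_right 0)"
      by (simp add: filterlim_at_right_to_top)
  qed
  then show ?thesis by (simp add: has_field_derivative_iff)
qed

lemma deriv_seq_flat_exp: "deriv_seq flat_exp"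
  unfolding deriv_seq_def
proof (intro allI)
  fix k and x :: real
  consider "x > 0" | "x < 0" | "x = 0" by linarith
  then show "(flat_exp k has_real_derivative flat_exp (Suc k) x) (at x)"
  proof cases
    case 1
    show ?thesis
      by (rule has_field_derivative_transform_within_open[OF flat_exp_pos_deriv[OF 1], of "{0<..}"])
         (use 1 in \<open>auto simp: flat_exp_def\<close>)
  next
    case 2
    have "((\<lambda>x. 0) has_real_derivative flat_exp (Suc k) x) (at x)"
      using 2 by (simp add: flat_exp_def)
    then show ?thesis
      by (rule has_field_derivative_transform_within_open[of _ _ _ "{..<0}"])
         (use 2 in \<open>auto simp: flat_exp_def\<close>)
  next
    case 3
    then show ?thesis using flat_exp_deriv_0 by (simp add: flat_exp_def)
  qed
qed

lemma test_fun_has_deriv: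
  assumes "test_fun L \<phi>"
  shows "(\<phi> has_real_derivative deriv \<phi> x) (at x)" "(deriv \<phi> has_real_derivative deriv (deriv \<phi>) x) (at x)"
  using test_fun_deriv_seq[OF assms] unfolding deriv_seq_def
  by (metis funpow_0 funpow_simps_right(2) o_apply One_nat_def)+

lemma test_fun_continuous:
  assumes "test_fun L \<phi>"
  shows "continuous_on S \<phi>" "continuous_on S (deriv \<phi>)"
  using test_fun_has_deriv[OF assms]
  by (meson DERIV_isCont continuous_at_imp_continuous_on)+

lemma test_fun_support:
  assumes "test_fun L \<phi>"
  obtains c d where "0 < c" "c \<le> d" "d < L" "\<And>x. x \<notin> {c..d} \<Longrightarrow> \<phi> x = 0"
      "\<And>x. x \<notin> {c..d} \<Longrightarrow> deriv \<phi> x = 0"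
proof -
  obtain c d where cd: "0 < c" "c \<le> d" "d < L" "\<And>x. x \<notin> {c..d} \<Longrightarrow> \<phi> x = 0"
    using assms by (auto simp: test_fun_def)
  have "deriv \<phi> x = 0" if "x \<notin> {c..d}" for x
  proof -
    have "((\<lambda>x. 0) has_real_derivative 0) (at x)" by simp
    then have "(\<phi> has_real_derivative 0) (at x)"
      by (rule has_field_derivative_transform_within_open[of _ _ _ "- {c..d}"]) (use that cd in auto)
    then show ?thesis by (rule DERIV_imp_deriv)
  qed
  then show ?thesis using cd that by blast
qed

lemma test_fun_endpoints:
  assumes "test_fun L \<phi>"
  shows "\<phi> 0 = 0" "\<phi> L = 0"
  using test_fun_support[OF assms] by (metis atLeastAtMost_iff not_le)+

text \<open>The product of two copies of the cut-off \<open>flat_exp 0\<close>, switched on at \<open>a + 1/(n+1)\<close> and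
  off at \<open>L - 1/(n+1)\<close>.\<close>

definition bump :: "real \<Rightarrow> real \<Rightarrow> nat \<Rightarrow> real \<Rightarrow> real" where
  "bump L a n x = flat_exp 0 (real (Suc n) * x + (- real (Suc n) * a - 1)) *
                  flat_exp 0 ((- real (Suc n)) * x + (real (Suc n) * L - 1))"

lemma bump_vanishes:
  assumes "x \<le> a + 1 / real (Suc n) \<or> x \<ge> L - 1 / real (Suc n)"
  shows "bump L a n x = 0"
proof -
  define m where "m = real (Suc n)"
  have "m * x \<le> m * a + 1 \<or> m * x \<ge> m * L - 1"
    using assms by (auto simp: m_def field_simps)
  then show ?thesis unfolding bump_def m_def[symmetric] by (auto simp: flat_exp_def)
qed

lemma bump_test_fun:
  assumes "0 \<le> a" "a < L"
  shows "test_fun L (bump L a n)"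
proof -
  define m where "m = real (Suc n)"
  have m: "m \<ge> 1" by (simp add: m_def)
  let ?D = "\<lambda>k x. \<Sum>i = 0..k. of_nat (k choose i) * (m ^ i * flat_exp i (m * x + (- m * a - 1))) *
                   ((- m) ^ (k - i) * flat_exp (k - i) ((- m) * x + (m * L - 1)))"
  have D: "deriv_seq ?D"
    by (intro deriv_seq_mult deriv_seq_affine deriv_seq_flat_exp)
  have D0: "?D 0 = bump L a n" by (auto simp: bump_def m_def)
  have vanish: "?D 0 x = 0" if "x \<notin> {a + 1/m..L - 1/m}" for x
  proof -
    have "bump L a n x = 0" using that by (intro bump_vanishes) (auto simp: m_def)
    then show ?thesis using fun_cong[OF D0, of x] by simp
  qed
  show ?thesis
  proof (cases "a + 1/m \<le> L - 1/m")
    case True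
    have "0 < 1/m" using m by simp
    then have "test_fun L (?D 0)"
      by (intro deriv_seq_imp_test_fun[OF D _ True] vanish) (use assms in linarith)+
    then show ?thesis using D0 by simp
  next
    case False
    then have "?D 0 x = 0" for x using vanish by force
    then have "test_fun L (?D 0)"
      using deriv_seq_imp_test_fun[OF D, of "L/2" "L/2" L] assms by auto
    then show ?thesis using D0 by simp
  qed
qed

lemma bump_bounds: "0 \<le> bump L a n x" "bump L a n x \<le> 1"
  unfolding bump_def flat_exp_def by (auto intro!: mult_le_one)

lemma bump_tendsto_indicator: "(\<lambda>n. bump L a n x) \<longlonglongrightarrow> indicator {a<..<L} x"
proof (cases "a < x \<and> x < L")
  case True
  then have p1: "x - a > 0" and p2: "L - x > 0" by auto
  have "\<forall>\<^sub>F n in sequentially. bump L a n x =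
      exp (- (1 / (real (Suc n) * (x - a) - 1))) * exp (- (1 / (real (Suc n) * (L - x) - 1)))"
  proof -
    have "\<forall>\<^sub>F n in sequentially. real (Suc n) * (x - a) - 1 > 0" using p1 by real_asymp
    moreover have "\<forall>\<^sub>F n in sequentially. real (Suc n) * (L - x) - 1 > 0" using p2 by real_asymp
    ultimately show ?thesis
      by eventually_elim (simp add: bump_def flat_exp_def algebra_simps)
  qed
  moreover have "(\<lambda>n. exp (- (1 / (real (Suc n) * (x - a) - 1))) *
                      exp (- (1 / (real (Suc n) * (L - x) - 1)))) \<longlonglongrightarrow> 1"
    using p1 p2 by real_asymp
  ultimately show ?thesis using True tendsto_cong by fastforce
next
  case False
  have "x \<le> a + 1 / real (Suc n) \<or> x \<ge> L - 1 / real (Suc n)" for n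
    using False by (auto intro: order_trans[of _ a] order_trans[of _ L])
  then show ?thesis using False by (simp add: bump_vanishes)
qed

section \<open>The du Bois-Reymond lemma\<close>

lemma set_integrable_const_Icc: "set_integrable lborel {a..b::real} (\<lambda>x. c::real)"
  by (rule borel_integrable_atLeastAtMost') simp

lemma set_integrable_mult_continuous:
  fixes f g :: "real \<Rightarrow> real"
  assumes g: "set_integrable lborel {a..b} g" and f: "continuous_on {a..b} f"
  shows "set_integrable lborel {a..b} (\<lambda>x. f x * g x)"
proof -
  obtain C where C0: "C \<ge> 0" and C: "\<And>x. x \<in> {a..b} \<Longrightarrow> norm (f x) \<le> C"
    using continuous_on_compact_bound[OF compact_Icc f] by metis
  have fm: "(\<lambda>x. indicator {a..b} x *\<^sub>R f x) \<in> borel_measurable lborel"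
    using borel_measurable_continuous_on_indicator[OF _ f] by simp
  have gi: "integrable lborel (\<lambda>x. indicator {a..b} x *\<^sub>R g x)"
    using g by (simp add: set_integrable_def)
  then have gm: "(\<lambda>x. indicator {a..b} x *\<^sub>R g x) \<in> borel_measurable lborel" by auto
  have "(\<lambda>x. indicator {a..b} x *\<^sub>R (f x * g x)) =
        (\<lambda>x. (indicator {a..b} x *\<^sub>R f x) * (indicator {a..b} x *\<^sub>R g x))"
    by (auto simp: indicator_def)
  then have "(\<lambda>x. indicator {a..b} x *\<^sub>R (f x * g x)) \<in> borel_measurable lborel"
    using fm gm by simp
  then show ?thesis unfolding set_integrable_def
    by (rule Bochner_Integration.integrable_bound[OF integrable_mult_right[OF gi, of C]])
       (use C C0 in \<open>auto simp: indicator_def abs_mult intro!: AE_I2 mult_right_mono\<close>)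
qed

lemma L2_imp_set_integrable:
  assumes "L2 L f"
  shows "set_integrable lborel {0..L} f"
proof -
  have m: "(\<lambda>x. indicator {0..L} x *\<^sub>R f x) \<in> borel_measurable lborel"
    using assms by (simp add: L2_def set_borel_measurable_def)
  have "set_integrable lborel {0..L} (\<lambda>x. 1/2 + (f x)\<^sup>2 / 2)"
    using assms set_integrable_const_Icc by (auto simp: L2_def)
  moreover have "\<bar>f x\<bar> \<le> 1/2 + (f x)\<^sup>2 / 2" for x
    using sum_power2_ge_zero[of "\<bar>f x\<bar> - 1" 0] by (simp add: power2_eq_square algebra_simps)
  ultimately show ?thesis unfolding set_integrable_def
    by (intro Bochner_Integration.integrable_bound[OF _ m, of "\<lambda>x. indicator {0..L} x *\<^sub>R (1/2 + (f x)\<^sup>2 / 2)"])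
       (auto simp: indicator_def intro!: AE_I2)
qed

lemma bump_integral_tendsto:
  assumes h: "set_integrable lborel {0..L} h" and a: "0 \<le> a" "a < L"
  shows "(\<lambda>n. LINT x:{0..L}|lborel. h x * bump L a n x) \<longlonglongrightarrow>
           (LINT x:{0..L}|lborel. h x * indicator {a<..<L} x)"
  unfolding set_lebesgue_integral_def
proof (rule integral_dominated_convergence[where w = "\<lambda>x. norm (indicator {0..L} x *\<^sub>R h x)"])
  have hm: "(\<lambda>x. indicator {0..L} x *\<^sub>R h x) \<in> borel_measurable lborel"
    using h by (auto simp: set_integrable_def)
  have "bump L a n \<in> borel_measurable lborel" for n
    using test_fun_continuous(1)[OF bump_test_fun[OF a]] by (auto intro: borel_measurable_continuous_onI)
  with hm show "(\<lambda>x. indicator {0..L} x *\<^sub>R (h x * bump L a n x)) \<in> borel_measurable lborel" for n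
    by (simp add: mult.assoc[symmetric])
  from hm show "(\<lambda>x. indicator {0..L} x *\<^sub>R (h x * indicator {a<..<L} x)) \<in> borel_measurable lborel"
    by (simp add: mult.assoc[symmetric])
  show "integrable lborel (\<lambda>x. norm (indicator {0..L} x *\<^sub>R h x))"
    using h by (simp add: set_integrable_def)
  show "AE x in lborel. (\<lambda>n. indicator {0..L} x *\<^sub>R (h x * bump L a n x)) \<longlonglongrightarrow>
          indicator {0..L} x *\<^sub>R (h x * indicator {a<..<L} x)"
    by (intro AE_I2 tendsto_intros bump_tendsto_indicator)
  show "AE x in lborel. norm (indicator {0..L} x *\<^sub>R (h x * bump L a n x)) \<le>
          norm (indicator {0..L} x *\<^sub>R h x)" for n
    using bump_bounds[of L a n]
    by (intro AE_I2) (auto simp: abs_mult indicator_def intro: mult_left_le)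
qed

text \<open>The finite measures with densities \<open>max 0 h\<close> and \<open>max 0 (- h)\<close> agree on all
  half-lines, hence are equal.\<close>

lemma tail_integrals_zero_imp_AE_zero:
  fixes h :: "real \<Rightarrow> real"
  assumes hi: "integrable lborel h"
    and tails: "\<And>x. (LINT y|lborel. h y * indicator {x<..} y) = 0"
  shows "AE y in lborel. h y = 0"
proof -
  define hp where "hp y = max 0 (h y)" for y
  define hn where "hn y = max 0 (- h y)" for y
  have hpi: "integrable lborel hp" and hni: "integrable lborel hn"
    using hi unfolding hp_def[abs_def] hn_def[abs_def] by auto
  have [measurable]: "hp \<in> borel_measurable lborel" "hn \<in> borel_measurable lborel"
    using hpi hni by auto
  have hpnn: "\<And>y. hp y \<ge> 0" and hnnn: "\<And>y. hn y \<ge> 0" by (auto simp: hp_def hn_def)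
  have emeasure_half_line:
    "emeasure (density lborel (\<lambda>y. ennreal (f y))) {x<..} = ennreal (LINT y|lborel. f y * indicator {x<..} y)"
    if fi: "integrable lborel f" and fnn: "\<And>y. f y \<ge> 0" for f :: "real \<Rightarrow> real" and x :: real
  proof -
    have [measurable]: "f \<in> borel_measurable lborel" using fi by auto
    have "emeasure (density lborel (\<lambda>y. ennreal (f y))) {x<..} =
          (\<integral>\<^sup>+ y. ennreal (f y * indicator {x<..} y) \<partial>lborel)"
      by (subst emeasure_density) (auto intro!: nn_integral_cong simp: indicator_def)
    also have "\<dots> = ennreal (LINT y|lborel. f y * indicator {x<..} y)"
      by (rule nn_integral_eq_integral) (use fi fnn in \<open>auto intro!: integrable_real_mult_indicator\<close>)
    finally show ?thesis .
  qed
  have "density lborel (\<lambda>y. ennreal (hp y)) = density lborel (\<lambda>y. ennreal (hn y))"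
  proof (rule measure_eqI_lessThan)
    show "emeasure (density lborel (\<lambda>y. ennreal (hp y))) {x<..} < \<infinity>" for x
      using emeasure_half_line[OF hpi hpnn, of x] by simp
    show "emeasure (density lborel (\<lambda>y. ennreal (hp y))) {x<..} =
          emeasure (density lborel (\<lambda>y. ennreal (hn y))) {x<..}" for x
    proof -
      have "(LINT y|lborel. hp y * indicator {x<..} y) - (LINT y|lborel. hn y * indicator {x<..} y)
          = (LINT y|lborel. hp y * indicator {x<..} y - hn y * indicator {x<..} y)"
        by (rule Bochner_Integration.integral_diff[symmetric])
           (auto intro!: integrable_real_mult_indicator hpi hni)
      also have "\<dots> = (LINT y|lborel. h y * indicator {x<..} y)"
        by (rule Bochner_Integration.integral_cong) (auto simp: hp_def hn_def indicator_def)
      finally show ?thesis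
        using emeasure_half_line[OF hpi hpnn, of x] emeasure_half_line[OF hni hnnn, of x] tails by simp
    qed
  qed auto
  then have "AE y in lborel. ennreal (hp y) = ennreal (hn y)"
    using sigma_finite_measure.density_unique_iff[OF sigma_finite_lborel,
            of "\<lambda>y. ennreal (hp y)" "\<lambda>y. ennreal (hn y)"] by simp
  then show ?thesis
    by eventually_elim (use hpnn hnnn in \<open>auto simp: hp_def hn_def max_def split: if_splits\<close>)
qed

lemma test_integrals_zero_imp_AE_zero:
  assumes L: "L > 0" and h: "set_integrable lborel {0..L} h"
    and test: "\<And>\<psi>. test_fun L \<psi> \<Longrightarrow> (LINT x:{0..L}|lborel. h x * \<psi> x) = 0"
  shows "AE x in lborel. x \<in> {0..L} \<longrightarrow> h x = 0"
proof -
  define hh where "hh y = indicator {0..L} y * h y" for y :: real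
  have hhi: "integrable lborel hh"
    using h unfolding set_integrable_def hh_def[abs_def] by simp
  have "(LINT y|lborel. hh y * indicator {x<..} y) = 0" for x
  proof (cases "x < L")
    case False
    then have "(\<lambda>y. hh y * indicator {x<..} y) = (\<lambda>y. 0)" by (auto simp: hh_def indicator_def)
    then show ?thesis by simp
  next
    case True
    define a where "a = max x 0"
    have a: "0 \<le> a" "a < L" using True L by (auto simp: a_def)
    have "AE y in lborel. hh y * indicator {x<..} y =
            indicator {0..L} y *\<^sub>R (h y * indicator {a<..<L} y)"
      using AE_lborel_singleton[of 0] AE_lborel_singleton[of L]
      by eventually_elim (auto simp: hh_def indicator_def a_def)
    moreover have "(\<lambda>y. indicator {0..L} y *\<^sub>R (h y * indicator {a<..<L} y)) \<in> borel_measurable lborel"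
      using h by (auto simp: set_integrable_def mult.assoc[symmetric])
    ultimately have "(LINT y|lborel. hh y * indicator {x<..} y) =
                     (LINT y:{0..L}|lborel. h y * indicator {a<..<L} y)"
      unfolding set_lebesgue_integral_def using hhi by (intro integral_cong_AE) auto
    also have "\<dots> = 0"
      using bump_integral_tendsto[OF h a] test[OF bump_test_fun[OF a]]
      by (simp add: LIMSEQ_const_iff)
    finally show ?thesis .
  qed
  then have "AE y in lborel. hh y = 0" by (rule tail_integrals_zero_imp_AE_zero[OF hhi])
  then show ?thesis by eventually_elim (auto simp: hh_def indicator_def)
qed

lemma test_fun_exists_nonzero_integral:
  assumes L: "L > 0"
  obtains \<psi> where "test_fun L \<psi>" "(LINT x:{0..L}|lborel. \<psi> x) \<noteq> 0"
proof -
  have "(LINT x:{0..L}|lborel. (1::real) * indicator {0<..<L} x) = (LINT x|lborel. indicator {0<..<L} x)"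
    unfolding set_lebesgue_integral_def
    by (rule Bochner_Integration.integral_cong) (auto simp: indicator_def)
  also have "\<dots> = L" using L by simp
  finally have "(\<lambda>n. LINT x:{0..L}|lborel. 1 * bump L 0 n x) \<longlonglongrightarrow> L"
    using bump_integral_tendsto[OF set_integrable_const_Icc[of 0 L 1], of 0] L by simp
  then have "\<forall>\<^sub>F n in sequentially. (LINT x:{0..L}|lborel. bump L 0 n x) \<noteq> 0"
    using L by (intro tendsto_imp_eventually_ne) auto
  then obtain n where "(LINT x:{0..L}|lborel. bump L 0 n x) \<noteq> 0"
    by (auto simp: eventually_sequentially)
  then show ?thesis using that bump_test_fun[of 0 L] L by auto
qed

lemma test_fun_set_integrable:
  assumes "test_fun L \<psi>" "set_integrable lborel {0..L} g"
  shows "set_integrable lborel {0..L} \<psi>"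
    and "set_integrable lborel {0..L} (\<lambda>x. g x * \<psi> x)"
    and "set_integrable lborel {0..L} (\<lambda>x. g x * deriv \<psi> x)"
    apply (rule borel_integrable_atLeastAtMost'[OF test_fun_continuous(1)[OF assms(1)]])
   apply (subst mult.commute, rule set_integrable_mult_continuous[OF assms(2) test_fun_continuous(1)[OF assms(1)]])
  apply (subst mult.commute, rule set_integrable_mult_continuous[OF assms(2) test_fun_continuous(2)[OF assms(1)]])
  done

lemma deriv_seq_primitive:
  assumes "deriv_seq D" and "\<And>x. (\<Phi> has_real_derivative D 0 x) (at x)"
  shows "deriv_seq (case_nat \<Phi> D)"
  using assms unfolding deriv_seq_def by (auto split: nat.split)

text \<open>The primitive of \<open>D 0\<close> vanishes left of \<open>c\<close>, and right of \<open>d\<close> because \<open>D 0\<close> has mean zero.\<close>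

lemma test_fun_primitive:
  assumes D: "deriv_seq D" and cd: "0 < c" "c \<le> d" "d < L"
    and supp: "\<And>x. x \<notin> {c..d} \<Longrightarrow> D 0 x = 0"
    and mean0: "(LINT x:{0..L}|lborel. D 0 x) = 0"
  obtains \<Phi> where "test_fun L \<Phi>" "\<And>x. deriv \<Phi> x = D 0 x"
proof -
  define c' d' where "c' = c / 2" and "d' = (d + L) / 2"
  have cd': "0 < c'" "c' < c" "d < d'" "d' < L" "0 \<le> d'" using cd by (auto simp: c'_def d'_def)
  have cont: "continuous_on UNIV (D 0)"
    using D unfolding deriv_seq_def by (meson DERIV_isCont continuous_at_imp_continuous_on)
  have intg: "D 0 integrable_on {a..b}" for a b
    by (rule integrable_continuous_real) (use cont continuous_on_subset in blast)
  have null: "integral {a..b} (D 0) = 0" if "\<And>t. t \<in> {a..b} \<Longrightarrow> t \<notin> {c..d}" for a b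
    using integral_cong[of "{a..b}" "D 0" "\<lambda>_. 0"] supp that by simp
  have split: "integral {0..x} (D 0) = integral {0..d'} (D 0)" if "d' \<le> x" for x
    using Henstock_Kurzweil_Integration.integral_combine[OF _ that intg, of 0] null[of d' x] cd' that
    by simp
  define \<Phi> where "\<Phi> x = integral {0..x} (D 0)" for x
  have Phi_lo: "\<Phi> x = 0" if "x \<le> c'" for x
    unfolding \<Phi>_def by (rule null) (use that cd' in auto)
  have "integral {0..L} (D 0) = 0"
    using mean0 set_borel_integral_eq_integral(2)[OF borel_integrable_atLeastAtMost', of 0 L "D 0"]
      cont continuous_on_subset by fastforce
  then have Phi_hi: "\<Phi> x = 0" if "x \<ge> d'" for x
    unfolding \<Phi>_def using split[OF that] split[of L] cd' by simp
  have der: "(\<Phi> has_real_derivative D 0 x) (at x)" for x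
  proof (cases "x < c'")
    case True
    have "((\<lambda>x. 0) has_real_derivative D 0 x) (at x)" using supp[of x] True cd' by simp
    then show ?thesis
      by (rule has_field_derivative_transform_within_open[of _ _ _ "{..<c'}"]) (use True Phi_lo in auto)
  next
    case False
    have "(\<Phi> has_real_derivative D 0 x) (at x within {0..x+1})"
      unfolding \<Phi>_def
      by (rule integral_has_real_derivative) (use False cd' cont continuous_on_subset in auto)
    moreover have "at x within {0..x+1} = at x"
      by (rule at_within_interior) (use False cd' in auto)
    ultimately show ?thesis by simp
  qed
  have "\<Phi> x = 0" if "x \<notin> {c'..d'}" for x using that Phi_lo Phi_hi by force
  moreover have "c' \<le> d'" using cd cd' by linarith
  ultimately have "test_fun L \<Phi>"
    using deriv_seq_imp_test_fun[OF deriv_seq_primitive[OF D der], of c' d' L] cd' by simp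
  moreover have "deriv \<Phi> x = D 0 x" for x using der by (rule DERIV_imp_deriv)
  ultimately show ?thesis using that by blast
qed

text \<open>Every test function differs from a fixed multiple of \<open>\<psi>\<^sub>0\<close> by the derivative of a
  test function, which \<open>g - c\<close> annihilates.\<close>

lemma du_Bois_Reymond:
  assumes L: "L > 0" and g: "set_integrable lborel {0..L} g"
    and der: "\<And>\<phi>. test_fun L \<phi> \<Longrightarrow> (LINT x:{0..L}|lborel. g x * deriv \<phi> x) = 0"
  obtains c where "AE x in lborel. x \<in> {0..L} \<longrightarrow> g x = c"
proof -
  obtain \<psi>0 where t0: "test_fun L \<psi>0" and I0: "(LINT x:{0..L}|lborel. \<psi>0 x) \<noteq> 0"
    using test_fun_exists_nonzero_integral[OF L] by blast
  define I0 where "I0 = (LINT x:{0..L}|lborel. \<psi>0 x)"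
  define c where "c = (LINT x:{0..L}|lborel. g x * \<psi>0 x) / I0"
  have "AE x in lborel. x \<in> {0..L} \<longrightarrow> g x - c = 0"
  proof (rule test_integrals_zero_imp_AE_zero[OF L])
    show "set_integrable lborel {0..L} (\<lambda>x. g x - c)"
      by (rule set_integral_diff(1)[OF g set_integrable_const_Icc])
    fix \<psi> assume t: "test_fun L \<psi>"
    define k where "k = (LINT x:{0..L}|lborel. \<psi> x) / I0"
    define D where "D j x = (deriv ^^ j) \<psi> x - k * (deriv ^^ j) \<psi>0 x" for j x
    have D: "deriv_seq D"
      unfolding D_def[abs_def] using t t0 by (intro deriv_seq_diff test_fun_deriv_seq)
    obtain c1 d1 where cd1: "0 < c1" "c1 \<le> d1" "d1 < L" "\<And>x. x \<notin> {c1..d1} \<Longrightarrow> \<psi> x = 0"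
      using test_fun_support[OF t] by metis
    obtain c2 d2 where cd2: "0 < c2" "c2 \<le> d2" "d2 < L" "\<And>x. x \<notin> {c2..d2} \<Longrightarrow> \<psi>0 x = 0"
      using test_fun_support[OF t0] by metis
    have "(LINT x:{0..L}|lborel. D 0 x) = (LINT x:{0..L}|lborel. \<psi> x) - k * I0"
      using test_fun_set_integrable(1)[OF t g] test_fun_set_integrable(1)[OF t0 g]
      by (simp add: D_def I0_def)
    also have "\<dots> = 0" using I0 by (simp add: k_def I0_def)
    finally have mean0: "(LINT x:{0..L}|lborel. D 0 x) = 0" .
    have supp: "D 0 x = 0" if "x \<notin> {min c1 c2..max d1 d2}" for x
    proof -
      have "x \<notin> {c1..d1}" "x \<notin> {c2..d2}" using that by auto
      then show ?thesis using cd1(4)[of x] cd2(4)[of x] by (simp add: D_def)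
    qed
    have "0 < min c1 c2" "min c1 c2 \<le> max d1 d2" "max d1 d2 < L" using cd1 cd2 by auto
    then obtain \<Phi> where tP: "test_fun L \<Phi>" and dP: "\<And>x. deriv \<Phi> x = D 0 x"
      using test_fun_primitive[OF D _ _ _ supp mean0] by blast
    have "0 = (LINT x:{0..L}|lborel. g x * \<psi> x - k * (g x * \<psi>0 x))"
      using der[OF tP] by (simp add: dP D_def algebra_simps)
    also have "\<dots> = (LINT x:{0..L}|lborel. g x * \<psi> x) - k * (LINT x:{0..L}|lborel. g x * \<psi>0 x)"
      using test_fun_set_integrable(2)[OF t g] test_fun_set_integrable(2)[OF t0 g] by simp
    finally have "(LINT x:{0..L}|lborel. g x * \<psi> x) = c * (LINT x:{0..L}|lborel. \<psi> x)"
      using I0 by (simp add: k_def c_def I0_def)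
    then show "(LINT x:{0..L}|lborel. (g x - c) * \<psi> x) = 0"
      using test_fun_set_integrable[OF t g] by (simp add: left_diff_distrib)
  qed
  then show ?thesis using that by auto
qed

section \<open>Weak derivatives and primitives\<close>

lemma set_integral_FTC_Icc:
  fixes F f :: "real \<Rightarrow> real"
  assumes "a \<le> b" and "continuous_on {a..b} f"
    and "\<And>x. x \<in> {a..b} \<Longrightarrow> (F has_real_derivative f x) (at x within {a..b})"
  shows "(LINT x:{a..b}|lborel. f x) = F b - F a"
  unfolding set_lebesgue_integral_def using assms
  by (intro integral_FTC_atLeastAtMost) (auto simp: has_real_derivative_iff_has_vector_derivative)

lemma primitive_eq_integral:
  fixes v :: "real \<Rightarrow> real"
  assumes "set_integrable lborel {0..L} v" and "x \<in> {0..L}"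
  shows "(LINT t:{0..x}|lborel. v t) = integral {0..x} v"
proof -
  have "set_integrable lborel {0..x} v"
    by (rule set_integrable_subset[OF assms(1)]) (use assms(2) in auto)
  then show ?thesis by (rule set_borel_integral_eq_integral)
qed

lemma continuous_on_primitive:
  fixes v :: "real \<Rightarrow> real"
  assumes "set_integrable lborel {0..L} v"
  shows "continuous_on {0..L} (\<lambda>x. LINT t:{0..x}|lborel. v t)"
proof -
  have "v integrable_on {0..L}" using set_borel_integral_eq_integral(1)[OF assms] .
  then have "continuous_on {0..L} (\<lambda>x. integral {0..x} v)" by (rule indefinite_integral_continuous_1)
  then show ?thesis by (rule continuous_on_eq) (use primitive_eq_integral[OF assms] in auto)
qed

lemma has_real_derivative_primitive:
  fixes v :: "real \<Rightarrow> real"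
  assumes vc: "continuous_on {0..L} v" and x: "x \<in> {0..L}"
  shows "((\<lambda>x. LINT t:{0..x}|lborel. v t) has_real_derivative v x) (at x within {0..L})"
  using integral_has_real_derivative[OF vc x]
  by (rule has_field_derivative_transform_within[where d=1])
     (use x primitive_eq_integral[OF borel_integrable_atLeastAtMost'[OF vc]] in auto)

lemma AE_eq_imp_primitive_eq:
  fixes f g :: "real \<Rightarrow> real"
  assumes f: "set_borel_measurable lborel {0..L} f" and g: "set_borel_measurable lborel {0..L} g"
    and ae: "AE x in lborel. x \<in> {0..L} \<longrightarrow> f x = g x" and x: "x \<in> {0..L}"
  shows "(LINT t:{0..x}|lborel. f t) = (LINT t:{0..x}|lborel. g t)"
  unfolding set_lebesgue_integral_def
proof (rule integral_cong_AE)
  have restrict: "indicator {0..x} t *\<^sub>R h t = indicator {0..x} t * (indicator {0..L} t *\<^sub>R h t)"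
    for h :: "real \<Rightarrow> real" and t
    using x by (auto simp: indicator_def)
  show "(\<lambda>t. indicator {0..x} t *\<^sub>R f t) \<in> borel_measurable lborel"
    unfolding restrict using f by (simp add: set_borel_measurable_def)
  show "(\<lambda>t. indicator {0..x} t *\<^sub>R g t) \<in> borel_measurable lborel"
    unfolding restrict using g by (simp add: set_borel_measurable_def)
  show "AE t in lborel. indicator {0..x} t *\<^sub>R f t = indicator {0..x} t *\<^sub>R g t"
    using ae by eventually_elim (use x in \<open>auto simp: indicator_def\<close>)
qed

lemma AE_eq_continuous_imp_eq:
  fixes f g :: "real \<Rightarrow> real"
  assumes ab: "a < b" and f: "continuous_on {a..b} f" and g: "continuous_on {a..b} g"
    and ae: "AE x in lborel. x \<in> {a..b} \<longrightarrow> f x = g x" and x0: "x0 \<in> {a..b}"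
  shows "f x0 = g x0"
proof (rule ccontr)
  assume ne: "f x0 \<noteq> g x0"
  have "continuous_on {a..b} (\<lambda>x. f x - g x)" using f g by (intro continuous_intros)
  then obtain d where d: "d > 0"
    and dd: "\<And>y. y \<in> {a..b} \<Longrightarrow> dist y x0 < d \<Longrightarrow> dist (f y - g y) (f x0 - g x0) < \<bar>f x0 - g x0\<bar>"
    using ne x0 unfolding continuous_on_iff by (metis zero_less_abs_iff right_minus_eq)
  define a' b' where "a' = max a (x0 - d)" and "b' = min b (x0 + d)"
  have "a' < b'" using x0 d ab by (auto simp: a'_def b'_def)
  have ne: "f y \<noteq> g y" if "y \<in> {a'<..<b'}" for y
  proof -
    have "y \<in> {a..b}" "dist y x0 < d" using that by (auto simp: a'_def b'_def dist_real_def)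
    then show ?thesis using dd[of y] by (auto simp: dist_real_def abs_minus_commute)
  qed
  have "AE y in lborel. y \<notin> {a'<..<b'}"
    using ae by eventually_elim (use ne in \<open>auto simp: a'_def b'_def\<close>)
  then have "emeasure lborel {a'<..<b'} = 0"
    by (subst (asm) AE_iff_measurable[of "{a'<..<b'}"]) auto
  then show False using \<open>a' < b'\<close> by simp
qed

lemma integrable_lower_triangle:
  fixes H V :: "real \<Rightarrow> real"
  assumes V: "integrable lborel V" and H[measurable]: "H \<in> borel_measurable borel"
    and HB: "\<And>x. \<bar>H x\<bar> \<le> B * indicator {a..b} x"
  shows "integrable (lborel \<Otimes>\<^sub>M lborel) (\<lambda>(x, t). H x * V t * of_bool (t \<le> x))"
proof (rule lborel_pair.Fubini_integrable)
  have [measurable]: "V \<in> borel_measurable borel" using V by auto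
  show "(\<lambda>(x, t). H x * V t * of_bool (t \<le> x)) \<in> borel_measurable (lborel \<Otimes>\<^sub>M lborel)"
    by measurable
  have row: "integrable lborel (\<lambda>t. H x * (V t * indicator {..x} t))" for x
    using V by (intro integrable_mult_right integrable_real_mult_indicator) auto
  then show "AE x in lborel. integrable lborel (\<lambda>t. case (x, t) of (x, t) \<Rightarrow> H x * V t * of_bool (t \<le> x))"
    by (simp add: indicator_def mult.assoc)
  have bound: "norm (LINT t|lborel. norm (case (x, t) of (x, t) \<Rightarrow> H x * V t * of_bool (t \<le> x)))
          \<le> norm (indicator {a..b} x *\<^sub>R (B * (LINT t|lborel. \<bar>V t\<bar>)))" for x
  proof -
    have "integrable lborel (\<lambda>t. \<bar>H x * V t * of_bool (t \<le> x)\<bar>)"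
      using integrable_abs[OF row[of x]] by (simp add: indicator_def mult.assoc)
    then have "(LINT t|lborel. \<bar>H x * V t * of_bool (t \<le> x)\<bar>) \<le> (LINT t|lborel. \<bar>H x\<bar> * \<bar>V t\<bar>)"
      using V by (intro integral_mono) (auto simp: abs_mult)
    also have "\<dots> = \<bar>H x\<bar> * (LINT t|lborel. \<bar>V t\<bar>)" by simp
    also have "\<dots> \<le> B * indicator {a..b} x * (LINT t|lborel. \<bar>V t\<bar>)"
      using HB[of x] by (intro mult_right_mono) (auto simp: integral_nonneg_AE)
    also have "\<dots> \<le> \<bar>indicator {a..b} x * (B * (LINT t|lborel. \<bar>V t\<bar>))\<bar>"
      by (metis abs_ge_self mult.assoc mult.commute)
    finally show ?thesis by (simp add: integral_nonneg_AE)
  qed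
  have "integrable lborel (\<lambda>x. indicator {a..b} x *\<^sub>R (B * (LINT t|lborel. \<bar>V t\<bar>)))"
    using set_integrable_const_Icc unfolding set_integrable_def .
  then show "integrable lborel (\<lambda>x. LINT t|lborel. norm (case (x, t) of (x, t) \<Rightarrow> H x * V t * of_bool (t \<le> x)))"
    by (rule Bochner_Integration.integrable_bound) (use bound in \<open>auto intro: AE_I2\<close>)
qed

lemma set_integral_mult_primitive_iterated:
  fixes g v :: "real \<Rightarrow> real"
  shows "(LINT x:{0..L}|lborel. g x * (LINT t:{0..x}|lborel. v t)) =
         (LINT x|lborel. LINT t|lborel.
            indicator {0..L} x * g x * (indicator {0..L} t * v t) * of_bool (t \<le> x))"
  unfolding set_lebesgue_integral_def
proof (rule Bochner_Integration.integral_cong[OF refl])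
  fix x
  show "indicator {0..L} x *\<^sub>R (g x * (LINT t|lborel. indicator {0..x} t *\<^sub>R v t)) =
        (LINT t|lborel. indicator {0..L} x * g x * (indicator {0..L} t * v t) * of_bool (t \<le> x))"
  proof (cases "x \<in> {0..L}")
    case True
    have "(LINT t|lborel. indicator {0..x} t *\<^sub>R v t) =
          (LINT t|lborel. indicator {0..L} t * v t * of_bool (t \<le> x))"
      by (rule Bochner_Integration.integral_cong) (use True in \<open>auto simp: indicator_def\<close>)
    then show ?thesis using True by (simp add: mult.assoc)
  qed simp
qed

text \<open>Integration by parts against the primitive \<open>x \<mapsto> \<integral>\<^sub>0\<^sup>x v\<close> of a merely integrable
  \<open>v\<close>, proved by exchanging the order of integration over the triangle \<open>t \<le> x\<close>.\<close>

lemma integral_deriv_mult_primitive: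
  fixes v h h' :: "real \<Rightarrow> real"
  assumes L: "0 \<le> L" and v: "set_integrable lborel {0..L} v"
    and hd: "\<And>x. x \<in> {0..L} \<Longrightarrow> (h has_real_derivative h' x) (at x within {0..L})"
    and hc: "continuous_on {0..L} h'"
  shows "(LINT x:{0..L}|lborel. h' x * (LINT t:{0..x}|lborel. v t))
       = h L * (LINT t:{0..L}|lborel. v t) - (LINT t:{0..L}|lborel. h t * v t)"
proof -
  define V where "V t = indicator {0..L} t * v t" for t
  define H where "H x = indicator {0..L} x * h' x" for x
  define F where "F x t = H x * V t * of_bool (t \<le> x)" for x t
  have Vi: "integrable lborel V" using v unfolding set_integrable_def V_def[abs_def] by simp
  have Hm: "H \<in> borel_measurable borel"
    using borel_measurable_continuous_on_indicator[OF _ hc] unfolding H_def[abs_def] by simp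
  obtain B where "\<And>x. x \<in> {0..L} \<Longrightarrow> norm (h' x) \<le> B"
    using continuous_on_compact_bound[OF compact_Icc hc] by metis
  then have "\<bar>H x\<bar> \<le> B * indicator {0..L} x" for x by (auto simp: H_def indicator_def)
  from integrable_lower_triangle[OF Vi Hm this]
  have Fi: "integrable (lborel \<Otimes>\<^sub>M lborel) (case_prod F)" by (simp add: F_def[abs_def])
  have hcont: "continuous_on {0..L} h"
    using hd by (meson DERIV_continuous continuous_on_eq_continuous_within)
  have inner: "(LINT x|lborel. F x t) = V t * (h L - h t)" for t
  proof (cases "t \<in> {0..L}")
    case True
    have "(LINT x|lborel. F x t) = (LINT x|lborel. V t * (indicator {t..L} x *\<^sub>R h' x))"
      by (rule Bochner_Integration.integral_cong) (use True in \<open>auto simp: F_def H_def indicator_def\<close>)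
    also have "\<dots> = V t * (LINT x:{t..L}|lborel. h' x)" by (simp add: set_lebesgue_integral_def)
    also have "(LINT x:{t..L}|lborel. h' x) = h L - h t"
    proof (rule set_integral_FTC_Icc)
      show "continuous_on {t..L} h'" using True by (auto intro: continuous_on_subset[OF hc])
      show "(h has_real_derivative h' x) (at x within {t..L})" if "x \<in> {t..L}" for x
        using True that by (intro DERIV_subset[OF hd]) auto
    qed (use True in auto)
    finally show ?thesis .
  qed (simp add: F_def V_def)
  have "(LINT x:{0..L}|lborel. h' x * (LINT t:{0..x}|lborel. v t)) = (LINT x|lborel. LINT t|lborel. F x t)"
    unfolding F_def H_def V_def by (rule set_integral_mult_primitive_iterated)
  also have "\<dots> = (LINT t|lborel. LINT x|lborel. F x t)"
    using lborel_pair.Fubini_integral[OF Fi] by simp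
  also have "\<dots> = (LINT t|lborel. h L * V t - indicator {0..L} t *\<^sub>R (h t * v t))"
    by (rule Bochner_Integration.integral_cong) (auto simp: inner V_def algebra_simps)
  also have "\<dots> = h L * (LINT t:{0..L}|lborel. v t) - (LINT t:{0..L}|lborel. h t * v t)"
    using Vi set_integrable_mult_continuous[OF v hcont]
    unfolding set_integrable_def set_lebesgue_integral_def V_def by simp
  finally show ?thesis .
qed

lemma weak_deriv_AE_primitive:
  assumes L: "L > 0" and u: "set_integrable lborel {0..L} u" and v: "set_integrable lborel {0..L} v"
    and wd: "weak_deriv L u v"
  obtains c where "AE x in lborel. x \<in> {0..L} \<longrightarrow> u x = c + (LINT t:{0..x}|lborel. v t)"
proof -
  define V where "V x = (LINT t:{0..x}|lborel. v t)" for x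
  have Vc: "continuous_on {0..L} V" unfolding V_def[abs_def] by (rule continuous_on_primitive[OF v])
  have Vi: "set_integrable lborel {0..L} V" by (rule borel_integrable_atLeastAtMost'[OF Vc])
  have der: "(LINT x:{0..L}|lborel. (u x - V x) * deriv \<phi> x) = 0" if t: "test_fun L \<phi>" for \<phi>
  proof -
    have dc: "continuous_on {0..L} (deriv \<phi>)" by (rule test_fun_continuous(2)[OF t])
    have "(LINT x:{0..L}|lborel. (u x - V x) * deriv \<phi> x) =
          (LINT x:{0..L}|lborel. u x * deriv \<phi> x - deriv \<phi> x * V x)"
      by (simp add: algebra_simps)
    also have "\<dots> = (LINT x:{0..L}|lborel. u x * deriv \<phi> x) - (LINT x:{0..L}|lborel. deriv \<phi> x * V x)"
      by (rule set_integral_diff(2)[OF test_fun_set_integrable(3)[OF t u] set_integrable_mult_continuous[OF Vi dc]])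
    also have "(LINT x:{0..L}|lborel. deriv \<phi> x * V x) = - (LINT t:{0..L}|lborel. \<phi> t * v t)"
      using integral_deriv_mult_primitive[OF _ v, of \<phi> "deriv \<phi>"] L dc
        test_fun_has_deriv(1)[OF t] test_fun_endpoints[OF t]
      unfolding V_def by (auto intro: has_field_derivative_at_within)
    also have "(LINT x:{0..L}|lborel. u x * deriv \<phi> x) = - (LINT x:{0..L}|lborel. v x * \<phi> x)"
      using wd t by (simp add: weak_deriv_def)
    finally show ?thesis by (simp add: mult.commute)
  qed
  obtain c where "AE x in lborel. x \<in> {0..L} \<longrightarrow> u x - V x = c"
    using du_Bois_Reymond[OF L _ der] u Vi by blast
  then have "AE x in lborel. x \<in> {0..L} \<longrightarrow> u x = c + V x" by eventually_elim auto
  then show ?thesis using that unfolding V_def by blast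
qed

lemma weak_deriv_continuous_primitive:
  assumes L: "L > 0" and u: "set_integrable lborel {0..L} u" and v: "set_integrable lborel {0..L} v"
    and wd: "weak_deriv L u v" and uc: "continuous_on {0..L} u"
  obtains c where "\<And>x. x \<in> {0..L} \<Longrightarrow> u x = c + (LINT t:{0..x}|lborel. v t)"
proof -
  obtain c where "AE x in lborel. x \<in> {0..L} \<longrightarrow> u x = c + (LINT t:{0..x}|lborel. v t)"
    using weak_deriv_AE_primitive[OF L u v wd] by blast
  then have "u x = c + (LINT t:{0..x}|lborel. v t)" if "x \<in> {0..L}" for x
    using L uc that
    by (intro AE_eq_continuous_imp_eq[where f = u]) (auto intro!: continuous_intros continuous_on_primitive[OF v])
  then show ?thesis using that by blast
qed

lemma has_real_derivative_const_plus_primitive: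
  fixes u v :: "real \<Rightarrow> real"
  assumes vc: "continuous_on {0..L} v"
    and u: "\<And>x. x \<in> {0..L} \<Longrightarrow> u x = c + (LINT t:{0..x}|lborel. v t)" and x: "x \<in> {0..L}"
  shows "(u has_real_derivative v x) (at x within {0..L})"
proof -
  have "((\<lambda>x. c + (LINT t:{0..x}|lborel. v t)) has_real_derivative v x) (at x within {0..L})"
    using has_real_derivative_primitive[OF vc x] by (auto intro!: derivative_eq_intros)
  then show ?thesis
    by (rule has_field_derivative_transform_within[where d=1]) (use x u in auto)
qed

text \<open>Although \<open>w\<^sub>2\<close> need not be continuous, it agrees a.e. with the continuous \<open>W\<^sub>2\<close>,
  which is then the classical derivative of \<open>w\<^sub>1\<close>.\<close>

lemma in_H3L_classical_derivatives:
  assumes L: "L > 0" and H: "in_H3L L w w1 w2 w3"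
  obtains W2 c2 where "continuous_on {0..L} W2"
    and "\<And>x. x \<in> {0..L} \<Longrightarrow> W2 x = c2 + (LINT t:{0..x}|lborel. w3 t)"
    and "\<And>x. x \<in> {0..L} \<Longrightarrow> (w has_real_derivative w1 x) (at x within {0..L})"
    and "\<And>x. x \<in> {0..L} \<Longrightarrow> (w1 has_real_derivative W2 x) (at x within {0..L})"
proof -
  have l2: "L2 L w2" and wd: "weak_deriv L w w1" "weak_deriv L w1 w2" "weak_deriv L w2 w3"
    and c: "continuous_on {0..L} w" "continuous_on {0..L} w1"
    using H by (auto simp: in_H3L_def)
  have i: "set_integrable lborel {0..L} w" "set_integrable lborel {0..L} w1"
          "set_integrable lborel {0..L} w2" "set_integrable lborel {0..L} w3"
    using H by (auto simp: in_H3L_def intro: L2_imp_set_integrable)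
  obtain c2 where a2: "AE x in lborel. x \<in> {0..L} \<longrightarrow> w2 x = c2 + (LINT t:{0..x}|lborel. w3 t)"
    using weak_deriv_AE_primitive[OF L i(3,4) wd(3)] by blast
  define W2 where "W2 x = c2 + (LINT t:{0..x}|lborel. w3 t)" for x
  have W2c: "continuous_on {0..L} W2"
    unfolding W2_def by (intro continuous_intros continuous_on_primitive[OF i(4)])
  obtain a1 where a1: "\<And>x. x \<in> {0..L} \<Longrightarrow> w1 x = a1 + (LINT t:{0..x}|lborel. w2 t)"
    using weak_deriv_continuous_primitive[OF L i(2,3) wd(2) c(2)] by blast
  have "(LINT t:{0..x}|lborel. w2 t) = (LINT t:{0..x}|lborel. W2 t)" if "x \<in> {0..L}" for x
  proof (rule AE_eq_imp_primitive_eq[OF _ _ _ that])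
    show "set_borel_measurable lborel {0..L} w2" using l2 by (simp add: L2_def)
    show "set_borel_measurable lborel {0..L} W2"
      unfolding set_borel_measurable_def using borel_measurable_continuous_on_indicator[OF _ W2c] by simp
    show "AE x in lborel. x \<in> {0..L} \<longrightarrow> w2 x = W2 x" using a2 by (simp add: W2_def)
  qed
  then have w1d: "(w1 has_real_derivative W2 x) (at x within {0..L})" if "x \<in> {0..L}" for x
    using a1 that by (intro has_real_derivative_const_plus_primitive[OF W2c]) auto
  obtain a0 where "\<And>x. x \<in> {0..L} \<Longrightarrow> w x = a0 + (LINT t:{0..x}|lborel. w1 t)"
    using weak_deriv_continuous_primitive[OF L i(1,2) wd(1) c(1)] by blast
  then have "(w has_real_derivative w1 x) (at x within {0..L})" if "x \<in> {0..L}" for x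
    using that by (rule has_real_derivative_const_plus_primitive[OF c(2)])
  with W2c w1d that show ?thesis by (simp add: W2_def)
qed

section \<open>Kato's identity and the a priori bound\<close>

text \<open>The boundary terms vanish
  because \<open>w(0) = w(L) = w'(L) = 0\<close>.\<close>

lemma in_H3L_Kato_identity:
  assumes L: "L > 0" and H: "in_H3L L w w1 w2 w3"
  shows "(LINT x:{0..L}|lborel. x * w x * (w1 x + w3 x))
           = 3/2 * L2_norm_sq L w1 - 1/2 * L2_norm_sq L w"
proof -
  obtain W2 c2 where W2c: "continuous_on {0..L} W2"
    and W2: "\<And>x. x \<in> {0..L} \<Longrightarrow> W2 x = c2 + (LINT t:{0..x}|lborel. w3 t)"
    and wd: "\<And>x. x \<in> {0..L} \<Longrightarrow> (w has_real_derivative w1 x) (at x within {0..L})"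
    and w1d: "\<And>x. x \<in> {0..L} \<Longrightarrow> (w1 has_real_derivative W2 x) (at x within {0..L})"
    using in_H3L_classical_derivatives[OF L H] by blast
  have c: "continuous_on {0..L} w" "continuous_on {0..L} w1"
    and bc: "w 0 = 0" "w L = 0" "w1 L = 0" and i3: "set_integrable lborel {0..L} w3"
    using H by (auto simp: in_H3L_def intro: L2_imp_set_integrable)
  note cont = c W2c continuous_on_id
  note integrable = borel_integrable_atLeastAtMost' set_integrable_mult_continuous[OF i3]
  have "0 \<le> L" using L by simp
  define p where "p x = w x + x * w1 x" for x
  have pc: "continuous_on {0..L} p" unfolding p_def using cont by (intro continuous_intros)
  have "(LINT x:{0..L}|lborel. p x) = L * w L - 0 * w 0"
    by (rule set_integral_FTC_Icc[OF \<open>0 \<le> L\<close> pc]) (auto simp: p_def intro!: derivative_eq_intros wd)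
  then have mean_p: "(LINT x:{0..L}|lborel. p x) = 0" using bc by simp
  have "(LINT x:{0..L}|lborel. 3/2 * (w1 x)\<^sup>2 + p x * W2 x) =
        (w L * w1 L + L * (w1 L)\<^sup>2 / 2) - (w 0 * w1 0 + 0 * (w1 0)\<^sup>2 / 2)"
    by (rule set_integral_FTC_Icc[OF \<open>0 \<le> L\<close>])
       (use cont wd w1d in \<open>auto simp: p_def power2_eq_square field_simps
                             intro!: continuous_intros derivative_eq_intros\<close>)
  then have pW2: "(LINT x:{0..L}|lborel. p x * W2 x) = - 3/2 * L2_norm_sq L w1"
    using cont pc bc by (simp add: L2_norm_sq_def integrable continuous_intros)
  have "(LINT x:{0..L}|lborel. p x * (W2 x - c2)) = (LINT x:{0..L}|lborel. p x * (LINT t:{0..x}|lborel. w3 t))"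
    by (rule set_lebesgue_integral_cong) (auto simp: W2)
  also have "\<dots> = L * w L * (LINT t:{0..L}|lborel. w3 t) - (LINT t:{0..L}|lborel. t * w t * w3 t)"
    by (rule integral_deriv_mult_primitive[OF \<open>0 \<le> L\<close> i3 _ pc])
       (use wd in \<open>auto simp: p_def intro!: derivative_eq_intros\<close>)
  finally have "(LINT x:{0..L}|lborel. p x * (W2 x - c2)) = - (LINT x:{0..L}|lborel. x * w x * w3 x)"
    using bc by simp
  then have w3_term: "(LINT x:{0..L}|lborel. x * w x * w3 x) = 3/2 * L2_norm_sq L w1"
    using pW2 mean_p cont pc by (simp add: right_diff_distrib integrable continuous_intros)
  have "(LINT x:{0..L}|lborel. (w x)\<^sup>2 / 2 + x * w x * w1 x) = L * (w L)\<^sup>2 / 2 - 0 * (w 0)\<^sup>2 / 2"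
    by (rule set_integral_FTC_Icc[OF \<open>0 \<le> L\<close>])
       (use cont wd in \<open>auto simp: power2_eq_square algebra_simps
                         intro!: continuous_intros derivative_eq_intros\<close>)
  then have w1_term: "(LINT x:{0..L}|lborel. x * w x * w1 x) = - 1/2 * L2_norm_sq L w"
    using cont bc by (simp add: L2_norm_sq_def integrable continuous_intros)
  show ?thesis
    using w1_term w3_term cont by (simp add: distrib_left integrable continuous_intros)
qed

lemma set_borel_measurable_Icc_iff:
  fixes f :: "real \<Rightarrow> real"
  shows "set_borel_measurable lborel {a..b} f \<longleftrightarrow> f \<in> borel_measurable (restrict_space lborel {a..b})"
  unfolding set_borel_measurable_def by (subst borel_measurable_restrict_space_iff) auto

lemma L2_norm_sq_nonneg: "0 \<le> L2_norm_sq L f"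
  unfolding L2_norm_sq_def set_lebesgue_integral_def
  by (rule Bochner_Integration.integral_nonneg) (simp add: indicator_def)

lemma square_sum_le: "(p + q)\<^sup>2 \<le> 2 * p\<^sup>2 + 2 * (q\<^sup>2::real)"
  using sum_squares_bound[of p q] by (simp add: power2_sum)

lemma L2_add:
  assumes f: "L2 L f" and g: "L2 L g"
  shows "L2 L (\<lambda>x. f x + g x)"
proof -
  have [measurable]: "f \<in> borel_measurable (restrict_space lborel {0..L})"
    "g \<in> borel_measurable (restrict_space lborel {0..L})"
    using f g by (auto simp: L2_def set_borel_measurable_Icc_iff)
  have bound: "norm ((f x + g x)\<^sup>2) \<le> norm (2 * (f x)\<^sup>2 + 2 * (g x)\<^sup>2)" for x
    using square_sum_le[of "f x" "g x"] by (simp add: abs_of_nonneg)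
  have "set_integrable lborel {0..L} (\<lambda>x. 2 * (f x)\<^sup>2 + 2 * (g x)\<^sup>2)"
    using f g by (auto simp: L2_def)
  moreover have "set_borel_measurable lborel {0..L} (\<lambda>x. (f x + g x)\<^sup>2)"
    unfolding set_borel_measurable_Icc_iff by measurable
  ultimately have "set_integrable lborel {0..L} (\<lambda>x. (f x + g x)\<^sup>2)"
    by (rule set_integrable_bound) (rule AE_I2, rule impI, rule bound)
  moreover have "set_borel_measurable lborel {0..L} (\<lambda>x. f x + g x)"
    unfolding set_borel_measurable_Icc_iff by measurable
  ultimately show ?thesis by (simp add: L2_def)
qed

lemma L2_cmult:
  assumes "L2 L f"
  shows "L2 L (\<lambda>x. c * f x)"
proof -
  have [measurable]: "f \<in> borel_measurable (restrict_space lborel {0..L})"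
    using assms by (simp add: L2_def set_borel_measurable_Icc_iff)
  have "set_borel_measurable lborel {0..L} (\<lambda>x. c * f x)"
    unfolding set_borel_measurable_Icc_iff by measurable
  with assms show ?thesis by (simp add: L2_def power_mult_distrib)
qed

lemma L2_bounded:
  assumes f: "set_borel_measurable lborel {0..L} f" and B: "\<And>x. \<bar>f x\<bar> \<le> B"
  shows "L2 L f"
proof -
  have [measurable]: "f \<in> borel_measurable (restrict_space lborel {0..L})"
    using f by (simp add: set_borel_measurable_Icc_iff)
  have bound: "norm ((f x)\<^sup>2) \<le> norm (B\<^sup>2)" for x
    using B[of x] by (simp add: abs_le_square_iff[symmetric])
  have "set_borel_measurable lborel {0..L} (\<lambda>x. (f x)\<^sup>2)"
    unfolding set_borel_measurable_Icc_iff by measurable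
  then have "set_integrable lborel {0..L} (\<lambda>x. (f x)\<^sup>2)"
    by (rule set_integrable_bound[OF set_integrable_const_Icc]) (rule AE_I2, rule impI, rule bound)
  with f show ?thesis by (simp add: L2_def)
qed

lemma borel_measurable_sat [measurable]: "sat u0 \<in> borel_measurable borel"
  unfolding sat_def[abs_def] by measurable

lemma abs_sat_le: "0 \<le> u0 \<Longrightarrow> \<bar>sat u0 s\<bar> \<le> u0"
  by (auto simp: sat_def)

lemma L2_A_op:
  assumes H: "in_H3L L w w1 w2 w3" and u0: "0 \<le> u0"
  shows "L2 L (A_op a u0 w w1 w3)"
proof -
  have [measurable]: "w \<in> borel_measurable (restrict_space lborel {0..L})"
    using H by (simp add: in_H3L_def L2_def set_borel_measurable_Icc_iff)
  have "set_borel_measurable lborel {0..L} (\<lambda>x. sat u0 (w x))"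
    unfolding set_borel_measurable_Icc_iff by measurable
  then have "L2 L (\<lambda>x. sat u0 (w x))" using abs_sat_le[OF u0] by (rule L2_bounded)
  then have "L2 L (\<lambda>x. (-1) * (w1 x + w3 x) + (- a) * sat u0 (w x))"
    using H by (intro L2_add L2_cmult) (auto simp: in_H3L_def)
  moreover have "A_op a u0 w w1 w3 = (\<lambda>x. (-1) * (w1 x + w3 x) + (- a) * sat u0 (w x))"
    by (auto simp: A_op_def)
  ultimately show ?thesis by simp
qed

lemma L2_norm_sq_linear_part_le:
  assumes H: "in_H3L L w w1 w2 w3" and u0: "0 \<le> u0" and L: "L > 0"
  shows "L2_norm_sq L (\<lambda>x. w1 x + w3 x) \<le> 2 * L2_norm_sq L (A_op a u0 w w1 w3) + 2 * a\<^sup>2 * u0\<^sup>2 * L"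
proof -
  define f where "f = (\<lambda>x. w1 x + w3 x)"
  define A where "A = A_op a u0 w w1 w3"
  have Lf: "L2 L f" and LA: "L2 L A"
    using H L2_A_op[OF H u0] unfolding f_def A_def by (auto simp: in_H3L_def intro: L2_add)
  have "(f x)\<^sup>2 \<le> 2 * (A x)\<^sup>2 + 2 * (a * u0)\<^sup>2" for x
  proof -
    have "(a * sat u0 (w x))\<^sup>2 \<le> (a * u0)\<^sup>2"
      using abs_sat_le[OF u0, of "w x"] u0
      by (simp add: power_mult_distrib abs_le_square_iff[symmetric] abs_mult mult_left_mono)
    moreover have "f x = - A x + (- a * sat u0 (w x))" by (simp add: f_def A_def A_op_def)
    then have "(f x)\<^sup>2 \<le> 2 * (- A x)\<^sup>2 + 2 * (- a * sat u0 (w x))\<^sup>2"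
      by (simp only: square_sum_le)
    ultimately show ?thesis by simp
  qed
  then have "L2_norm_sq L f \<le> (LINT x:{0..L}|lborel. 2 * (A x)\<^sup>2 + 2 * (a * u0)\<^sup>2)"
    unfolding L2_norm_sq_def using Lf LA set_integrable_const_Icc
    by (intro set_integral_mono) (auto simp: L2_def)
  also have "\<dots> = 2 * L2_norm_sq L A + 2 * (a * u0)\<^sup>2 * L"
    using LA set_integrable_const_Icc L by (simp add: L2_def L2_norm_sq_def set_integral_const)
  finally show ?thesis by (simp add: power_mult_distrib f_def A_def)
qed

text \<open>By Kato's identity, \<open>3/2 \<parallel>w'\<parallel>\<^sup>2 - 1/2 \<parallel>w\<parallel>\<^sup>2 = \<integral> x w (w' + w''') \<le> L/2 (\<parallel>w\<parallel>\<^sup>2 + \<parallel>w' + w'''\<parallel>\<^sup>2)\<close>.\<close>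

lemma in_H3L_deriv_L2_bound:
  assumes L: "L > 0" and u0: "0 \<le> u0" and H: "in_H3L L w w1 w2 w3"
    and C: "L2_norm_sq L w + L2_norm_sq L (A_op a u0 w w1 w3) \<le> C"
  shows "L2_norm_sq L w1 \<le> (C + 2 * L * (C + a\<^sup>2 * u0\<^sup>2 * L)) / 3"
proof -
  define f where "f = (\<lambda>x. w1 x + w3 x)"
  define A where "A = A_op a u0 w w1 w3"
  have Lw: "L2 L w" and Lf: "L2 L f" and LA: "L2 L A"
    using H L2_A_op[OF H u0] unfolding f_def A_def by (auto simp: in_H3L_def intro: L2_add)
  have wc: "continuous_on {0..L} w" using H by (simp add: in_H3L_def)
  have Nw: "L2_norm_sq L w \<le> C" and NA: "L2_norm_sq L w + 2 * L2_norm_sq L A \<le> 2 * C"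
    using C L2_norm_sq_nonneg[of L w] L2_norm_sq_nonneg[of L A] by (auto simp: A_def)
  have Nf: "L2_norm_sq L f \<le> 2 * L2_norm_sq L A + 2 * a\<^sup>2 * u0\<^sup>2 * L"
    unfolding f_def A_def by (rule L2_norm_sq_linear_part_le[OF H u0 L])
  have "x * w x * f x \<le> L / 2 * ((w x)\<^sup>2 + (f x)\<^sup>2)" if "x \<in> {0..L}" for x
  proof -
    have "\<bar>w x * f x\<bar> \<le> ((w x)\<^sup>2 + (f x)\<^sup>2) / 2"
      using sum_squares_bound[of "\<bar>w x\<bar>" "\<bar>f x\<bar>"] by (simp add: abs_mult)
    then have "\<bar>x\<bar> * \<bar>w x * f x\<bar> \<le> L * (((w x)\<^sup>2 + (f x)\<^sup>2) / 2)"
      using that by (intro mult_mono) auto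
    then have "\<bar>x * w x * f x\<bar> \<le> L / 2 * ((w x)\<^sup>2 + (f x)\<^sup>2)" by (simp add: abs_mult mult.assoc)
    then show ?thesis by (rule order_trans[OF abs_ge_self])
  qed
  then have "(LINT x:{0..L}|lborel. x * w x * f x) \<le> (LINT x:{0..L}|lborel. L / 2 * ((w x)\<^sup>2 + (f x)\<^sup>2))"
    using set_integrable_mult_continuous[OF L2_imp_set_integrable[OF Lf], of "\<lambda>x. x * w x"] wc Lw Lf
    by (intro set_integral_mono) (auto simp: L2_def continuous_intros)
  also have "\<dots> = L / 2 * (L2_norm_sq L w + L2_norm_sq L f)"
    using Lw Lf by (simp add: L2_def L2_norm_sq_def)
  finally have "3/2 * L2_norm_sq L w1 - 1/2 * L2_norm_sq L w \<le> L / 2 * (L2_norm_sq L w + L2_norm_sq L f)"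
    using in_H3L_Kato_identity[OF L H] by (simp add: f_def)
  moreover have "L * (L2_norm_sq L w + L2_norm_sq L f) \<le> 2 * (L * (C + a\<^sup>2 * u0\<^sup>2 * L))"
    using NA Nf L mult_left_mono[of _ "2 * (C + a\<^sup>2 * u0\<^sup>2 * L)" L] by auto
  moreover have "L / 2 * (L2_norm_sq L w + L2_norm_sq L f) = L * (L2_norm_sq L w + L2_norm_sq L f) / 2"
    by simp
  ultimately have "3 * L2_norm_sq L w1 \<le> C + 2 * (L * (C + a\<^sup>2 * u0\<^sup>2 * L))" using Nw by linarith
  then show ?thesis by (simp add: mult.assoc)
qed

section \<open>Compactness\<close>

lemma abs_le_weighted_square:
  fixes s t :: real
  assumes "t > 0"
  shows "\<bar>s\<bar> \<le> (t * s\<^sup>2 + 1 / t) / 2"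
proof -
  have "2 * (t * \<bar>s\<bar>) * 1 \<le> (t * \<bar>s\<bar>)\<^sup>2 + 1\<^sup>2" by (rule sum_squares_bound)
  then show ?thesis using assms by (simp add: field_simps power2_eq_square)
qed

text \<open>Optimising over \<open>t\<close> would give the Hoelder bound \<open>\<parallel>u'\<parallel> |x - y|\<^sup>1\<^sup>/\<^sup>2\<close>; keeping \<open>t\<close>
  free avoids square roots.\<close>

lemma oscillation_le_L2_norm_sq_deriv:
  fixes u u' :: "real \<Rightarrow> real"
  assumes c: "continuous_on {0..L} u'"
    and d: "\<And>x. x \<in> {0..L} \<Longrightarrow> (u has_real_derivative u' x) (at x within {0..L})"
    and x: "x \<in> {0..L}" and y: "y \<in> {0..L}" and t: "t > 0"
  shows "\<bar>u x - u y\<bar> \<le> (t * L2_norm_sq L u' + \<bar>x - y\<bar> / t) / 2"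
proof -
  have intg: "f integrable_on {a..b}" if "continuous_on {0..L} f" "{a..b} \<subseteq> {0..L}"
    for f :: "real \<Rightarrow> real" and a b
    by (rule integrable_continuous_real) (use that continuous_on_subset in blast)
  have csq: "continuous_on {0..L} (\<lambda>s. t / 2 * (u' s)\<^sup>2)" using c by (intro continuous_intros)
  have "\<bar>u x - u y\<bar> \<le> (t * L2_norm_sq L u' + (x - y) / t) / 2"
    if yx: "y \<le> x" "x \<in> {0..L}" "y \<in> {0..L}" for x y
  proof -
    have sub: "{y..x} \<subseteq> {0..L}" using yx by auto
    have "(u has_real_derivative u' s) (at s within {y..x})" if "s \<in> {y..x}" for s
      using that sub by (intro DERIV_subset[OF d]) auto
    then have "(u' has_integral (u x - u y)) {y..x}"
      using yx by (intro fundamental_theorem_of_calculus)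
        (auto simp: has_real_derivative_iff_has_vector_derivative[symmetric])
    then have "\<bar>u x - u y\<bar> = norm (integral {y..x} u')" by (simp add: integral_unique)
    also have "\<dots> \<le> integral {y..x} (\<lambda>s. t / 2 * (u' s)\<^sup>2 + 1 / (2 * t))"
      using abs_le_weighted_square[OF t] c sub
      by (intro integral_norm_bound_integral intg) (auto simp: field_simps intro!: continuous_intros)
    also have "\<dots> = integral {y..x} (\<lambda>s. t / 2 * (u' s)\<^sup>2) + (x - y) / (2 * t)"
    proof -
      have "integral {y..x} (\<lambda>s. t / 2 * (u' s)\<^sup>2 + 1 / (2 * t)) =
            integral {y..x} (\<lambda>s. t / 2 * (u' s)\<^sup>2) + integral {y..x} (\<lambda>s. 1 / (2 * t))"
        by (rule integral_add[OF intg[OF csq sub] intg[OF _ sub]]) simp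
      then show ?thesis using yx by (simp add: content_real)
    qed
    also have "integral {y..x} (\<lambda>s. t / 2 * (u' s)\<^sup>2) \<le> integral {0..L} (\<lambda>s. t / 2 * (u' s)\<^sup>2)"
      using t by (intro integral_subset_le[OF sub intg[OF csq sub] intg[OF csq]]) auto
    also have "integral {0..L} (\<lambda>s. t / 2 * (u' s)\<^sup>2) = t / 2 * L2_norm_sq L u'"
      using set_borel_integral_eq_integral(2)[OF borel_integrable_atLeastAtMost'[OF csq], symmetric]
      by (simp add: L2_norm_sq_def)
    finally show ?thesis using t by (simp add: field_simps)
  qed
  from this[of x y] this[of y x] x y show ?thesis
    by (cases "y \<le> x") (auto simp: abs_minus_commute)
qed

lemma uniform_limit_imp_L2_limit:
  fixes f :: "nat \<Rightarrow> real \<Rightarrow> real"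
  assumes L: "L > 0" and f: "\<And>n. continuous_on {0..L} (f n)" and g: "continuous_on {0..L} g"
    and unif: "\<And>e. 0 < e \<Longrightarrow> \<exists>N. \<forall>n x. n \<ge> N \<and> x \<in> {0..L} \<longrightarrow> \<bar>f n x - g x\<bar> < e"
  shows "(\<lambda>n. L2_norm_sq L (\<lambda>x. f n x - g x)) \<longlonglongrightarrow> 0"
proof (rule LIMSEQ_I)
  fix r :: real assume r: "0 < r"
  define e where "e = sqrt (r / (2 * L))"
  have e: "e > 0" "e\<^sup>2 * L = r / 2" using r L by (simp_all add: e_def)
  obtain N where N: "\<And>n x. n \<ge> N \<Longrightarrow> x \<in> {0..L} \<Longrightarrow> \<bar>f n x - g x\<bar> < e"
    using unif[OF e(1)] by blast
  have "norm (L2_norm_sq L (\<lambda>x. f n x - g x) - 0) < r" if n: "n \<ge> N" for n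
  proof -
    have "L2_norm_sq L (\<lambda>x. f n x - g x) \<le> (LINT x:{0..L}|lborel. e\<^sup>2)"
      unfolding L2_norm_sq_def
    proof (rule set_integral_mono)
      show "set_integrable lborel {0..L} (\<lambda>x. (f n x - g x)\<^sup>2)"
        by (rule borel_integrable_atLeastAtMost') (use f g in \<open>auto intro!: continuous_intros\<close>)
      show "(f n x - g x)\<^sup>2 \<le> e\<^sup>2" if "x \<in> {0..L}" for x
        using N[OF n that] by (simp add: abs_le_square_iff[symmetric] less_imp_le)
    qed (rule set_integrable_const_Icc)
    also have "\<dots> = r / 2" using L e(2) by (simp add: set_integral_const mult.commute)
    finally show ?thesis using L2_norm_sq_nonneg[of L "\<lambda>x. f n x - g x"] r by simp
  qed
  then show "\<exists>N. \<forall>n\<ge>N. norm (L2_norm_sq L (\<lambda>x. f n x - g x) - 0) < r" by blast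
qed

lemma oscillation_bound_imp_L2_convergent_subseq:
  fixes f :: "nat \<Rightarrow> real \<Rightarrow> real"
  assumes L: "L > 0" and cont: "\<And>n. continuous_on {0..L} (f n)" and f0: "\<And>n. f n 0 = 0"
    and osc: "\<And>n x y t. x \<in> {0..L} \<Longrightarrow> y \<in> {0..L} \<Longrightarrow> t > 0 \<Longrightarrow>
                \<bar>f n x - f n y\<bar> \<le> (t * K + \<bar>x - y\<bar> / t) / 2"
  obtains r g where "strict_mono r" "L2 L g" "(\<lambda>n. L2_norm_sq L (\<lambda>x. f (r n) x - g x)) \<longlonglongrightarrow> 0"
proof -
  have K: "K \<ge> 0" using osc[of 0 0 1 0] L by simp
  have bounded: "norm (f n x) \<le> (K + L) / 2" if "x \<in> {0..L}" for n x
    using osc[of x 0 1 n] f0[of n] that L by auto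
  have equicont: "\<exists>d>0. \<forall>n y. y \<in> {0..L} \<and> norm (x - y) < d \<longrightarrow> norm (f n x - f n y) < e"
    if x: "x \<in> {0..L}" and e: "0 < e" for x e
  proof (intro exI conjI allI impI)
    define t where "t = e / (K + 1)"
    have t: "t > 0" "t * K < e" using e K by (auto simp: t_def field_simps)
    show "0 < e * t" using e t by simp
    fix n y assume y: "y \<in> {0..L} \<and> norm (x - y) < e * t"
    then have "\<bar>x - y\<bar> / t < e" using t by (simp add: field_simps)
    then show "norm (f n x - f n y) < e" using osc[OF x _ t(1), of y n] y t(2) by simp
  qed
  obtain g r where gc: "continuous_on {0..L} g" and r: "strict_mono (r :: nat \<Rightarrow> nat)"
    and unif: "\<And>e. 0 < e \<Longrightarrow> \<exists>N. \<forall>n x. n \<ge> N \<and> x \<in> {0..L} \<longrightarrow> norm (f (r n) x - g x) < e"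
    using Arzela_Ascoli[OF compact_Icc bounded equicont] by blast
  have "L2 L g"
    using gc borel_measurable_continuous_on_indicator[of "{0..L}" g]
    by (auto simp: L2_def set_borel_measurable_def intro!: borel_integrable_atLeastAtMost' continuous_intros)
  moreover have "(\<lambda>n. L2_norm_sq L (\<lambda>x. f (r n) x - g x)) \<longlonglongrightarrow> 0"
    using unif by (intro uniform_limit_imp_L2_limit[OF L cont gc]) auto
  ultimately show ?thesis using that r by blast
qed

theorem mainTheorem5:
  fixes L a u0 :: real and w w1 w2 w3 :: "nat \<Rightarrow> real \<Rightarrow> real"
  assumes "L > 0" and "a > 0" and "u0 > 0"
    and "\<forall>n. in_H3L L (w n) (w1 n) (w2 n) (w3 n)"
    and "\<exists>C. \<forall>n. L2_norm_sq L (w n) + L2_norm_sq L (A_op a u0 (w n) (w1 n) (w3 n)) \<le> C"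
  shows "\<exists>r g. strict_mono r \<and> L2 L g \<and>
           (\<lambda>n. L2_norm_sq L (\<lambda>x. w (r n) x - g x)) \<longlonglongrightarrow> 0"
proof -
  note L = assms(1) and H = assms(4)[rule_format]
  obtain C where C: "\<And>n. L2_norm_sq L (w n) + L2_norm_sq L (A_op a u0 (w n) (w1 n) (w3 n)) \<le> C"
    using assms(5) by blast
  define K where "K = (C + 2 * L * (C + a\<^sup>2 * u0\<^sup>2 * L)) / 3"
  have osc: "\<bar>w n x - w n y\<bar> \<le> (t * K + \<bar>x - y\<bar> / t) / 2"
    if "x \<in> {0..L}" "y \<in> {0..L}" "t > 0" for n x y t
  proof -
    have "\<And>x. x \<in> {0..L} \<Longrightarrow> (w n has_real_derivative w1 n x) (at x within {0..L})"
      using in_H3L_classical_derivatives[OF L H] by metis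
    then have "\<bar>w n x - w n y\<bar> \<le> (t * L2_norm_sq L (w1 n) + \<bar>x - y\<bar> / t) / 2"
      using H[of n] that by (intro oscillation_le_L2_norm_sq_deriv) (auto simp: in_H3L_def)
    also have "L2_norm_sq L (w1 n) \<le> K"
      unfolding K_def using assms(3) by (intro in_H3L_deriv_L2_bound[OF L _ H C]) simp
    finally show ?thesis using that(3) by (simp add: divide_right_mono mult_left_mono)
  qed
  have "continuous_on {0..L} (w n)" "w n 0 = 0" for n using H[of n] by (auto simp: in_H3L_def)
  then obtain r g where "strict_mono r" "L2 L g" "(\<lambda>n. L2_norm_sq L (\<lambda>x. w (r n) x - g x)) \<longlonglongrightarrow> 0"
    by (rule oscillation_bound_imp_L2_convergent_subseq[OF L _ _ osc])
  then show ?thesis by blast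
qed

end
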